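(* Let $G$ be a finite $p$-group, $k=\mathbb F_p$, and let $L,N$ be normal subgroups of $G$. Then (1) $\mathcal I(L)\mathcal I(N)kG+\mathcal I(N)\mathcal I(L)kG=\mathcal I([L,N])kG+\mathcal I(N)\mathcal I(L)kG$; (2) for every $n\ge1$, $\mathcal J^n(N,G)=\sum_{i=1}^{n}\mathcal I(N)^{n+1-i}\,\mathcal I(\gamma_i^G(N))kG$.
   Context: $\mathcal I(X)$ is the augmentation ideal of $kX$, viewed inside $kG$. The ideals $\mathcal J^n(N,G)$ are defined by $\mathcal J^1(N,G)=\mathcal I(N)\mathcal I(G)$ and $\mathcal J^{n+1}(N,G)=\mathcal I(N)\mathcal J^n(N,G)+\mathcal J^n(N,G)\mathcal I(N)$. The relative lower central series is $\gamma_1^G(N)=G$, $\gamma_{n+1}^G(N)=[\gamma_n^G(N),N]$. *)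

theory Defs
  imports "HOL-Algebra.Algebra"
begin

text \<open>Group algebra kG of a finite group G (HOL-Algebra structure) over a field type 'k:
  functions carrier G \<rightarrow> 'k, extended by 0 outside the carrier.\<close>

definition grp_alg :: "('g, 'b) monoid_scheme \<Rightarrow> ('g \<Rightarrow> 'k::field) set" where
  "grp_alg G = {f. \<forall>x. x \<notin> carrier G \<longrightarrow> f x = 0}"

definition ga_mult :: "('g, 'b) monoid_scheme \<Rightarrow> ('g \<Rightarrow> 'k::field) \<Rightarrow> ('g \<Rightarrow> 'k) \<Rightarrow> ('g \<Rightarrow> 'k)" where
  "ga_mult G a b = (\<lambda>x. if x \<in> carrier G
      then (\<Sum>y\<in>carrier G. a y * b (monoid.mult G (m_inv G y) x)) else 0)"

text \<open>Augmentation ideal I(X) of kX, viewed inside kG.\<close>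
definition aug_ideal :: "('g, 'b) monoid_scheme \<Rightarrow> 'g set \<Rightarrow> ('g \<Rightarrow> 'k::field) set" where
  "aug_ideal G S = {f. f \<in> grp_alg G \<and> (\<forall>x. x \<notin> S \<longrightarrow> f x = 0) \<and> sum f S = 0}"

definition sp_mult :: "('g, 'b) monoid_scheme \<Rightarrow> ('g \<Rightarrow> 'k::field) set \<Rightarrow> ('g \<Rightarrow> 'k) set \<Rightarrow> ('g \<Rightarrow> 'k) set" where
  "sp_mult G A B = {f. \<exists>(n::nat) a b. (\<forall>i<n. a i \<in> A \<and> b i \<in> B) \<and>
      f = (\<lambda>x. \<Sum>i<n. ga_mult G (a i) (b i) x)}"

definition sp_plus :: "('g \<Rightarrow> 'k::field) set \<Rightarrow> ('g \<Rightarrow> 'k) set \<Rightarrow> ('g \<Rightarrow> 'k) set" where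
  "sp_plus A B = {(\<lambda>x. a x + b x) | a b. a \<in> A \<and> b \<in> B}"

fun sp_pow :: "('g, 'b) monoid_scheme \<Rightarrow> ('g \<Rightarrow> 'k::field) set \<Rightarrow> nat \<Rightarrow> ('g \<Rightarrow> 'k) set" where
  "sp_pow G A 0 = grp_alg G"
| "sp_pow G A (Suc n) = sp_mult G A (sp_pow G A n)"

fun sp_sum :: "(nat \<Rightarrow> ('g \<Rightarrow> 'k::field) set) \<Rightarrow> nat \<Rightarrow> ('g \<Rightarrow> 'k) set" where
  "sp_sum f 0 = {(\<lambda>x. 0)}"
| "sp_sum f (Suc n) = sp_plus (sp_sum f n) (f (Suc n))"

definition comm_subgroup :: "('g, 'b) monoid_scheme \<Rightarrow> 'g set \<Rightarrow> 'g set \<Rightarrow> 'g set" where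
  "comm_subgroup G A B = generate G
     {monoid.mult G (monoid.mult G (monoid.mult G x y) (m_inv G x)) (m_inv G y) | x y. x \<in> A \<and> y \<in> B}"

text \<open>Relative lower central series, indexed from 1 (index 0 is a junk value).\<close>
fun rel_lcs :: "('g, 'b) monoid_scheme \<Rightarrow> 'g set \<Rightarrow> nat \<Rightarrow> 'g set" where
  "rel_lcs G N 0 = carrier G"
| "rel_lcs G N (Suc 0) = carrier G"
| "rel_lcs G N (Suc (Suc n)) = comm_subgroup G (rel_lcs G N (Suc n)) N"

text \<open>The ideals J^n(N,G), indexed from 1 (index 0 is a junk value).\<close>
fun rel_J :: "('g, 'b) monoid_scheme \<Rightarrow> 'g set \<Rightarrow> nat \<Rightarrow> ('g \<Rightarrow> 'k::field) set" where
  "rel_J G N 0 = grp_alg G"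
| "rel_J G N (Suc 0) = sp_mult G (aug_ideal G N) (aug_ideal G (carrier G))"
| "rel_J G N (Suc (Suc n)) = sp_plus (sp_mult G (aug_ideal G N) (rel_J G N (Suc n)))
                                      (sp_mult G (rel_J G N (Suc n)) (aug_ideal G N))"

end

theory Submission
  imports Defs "HOL-Library.Function_Algebras" "HOL-Library.Indicator_Function"
begin

text \<open>
  Write \<open>e(h) = h - 1\<close>. The augmentation ideal \<open>I(H)\<close> is spanned by the \<open>e(h)\<close> with
  \<open>h \<in> H\<close>, so by bilinearity everything reduces to generators. For (1), the identity
  \<open>e(l) e(n) - e(n) e(l) = e([l,n]) nl\<close> shows that modulo \<open>I(N) I(L) kG\<close> the elements
  \<open>e(l) e(n) r\<close> and \<open>e([l,n]) nl r\<close> agree; the relations \<open>e(h h') = e(h) h' + e(h')\<close> and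
  \<open>e(h\<inverse>) = - e(h) h\<inverse>\<close> carry this from the commutators to the subgroup they generate.

  For (2), let \<open>P i = kG I(\<gamma> i) kG\<close>. Normality of \<open>N\<close> gives \<open>kG I(N) = I(N) kG\<close>, and (1)
  for \<open>L = \<gamma> i\<close> then yields \<open>P i I(N) \<subseteq> P (i+1) + I(N) P i\<close> and
  \<open>P (i+1) \<subseteq> P i I(N) + I(N) P i\<close>: moving \<open>I(N)\<close> across \<open>P i\<close> costs at most one step
  of the series. These two inclusions let the recurrence \<open>J(n+1) = I(N) J(n) + J(n) I(N)\<close>
  be solved by \<open>\<Sum>i=1..n. I(N)^(n+1-i) P i\<close>, by induction on \<open>n\<close>.
\<close>

section \<open>Convolution\<close>

text \<open>Elements of \<open>kG\<close> are handled as vectors; pointwise evaluation is unfolded only on demand.\<close>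

declare plus_fun_apply[simp del] zero_fun_apply[simp del] minus_apply[simp del] uminus_apply[simp del]
lemmas fun_ops_apply = plus_fun_apply zero_fun_apply minus_apply uminus_apply

lemma sum_fun_apply: "sum f A x = (\<Sum>a\<in>A. f a x)"
  by (induction A rule: infinite_finite_induct) (auto simp: fun_ops_apply)

definition fun_scale :: "'k::field \<Rightarrow> ('g \<Rightarrow> 'k) \<Rightarrow> 'g \<Rightarrow> 'k" where
  "fun_scale c f = (\<lambda>x. c * f x)"

lemma fun_scale_add: "fun_scale c (f + g) = fun_scale c f + fun_scale c g"
  by (auto simp: fun_scale_def fun_eq_iff fun_ops_apply distrib_left)

lemma fun_scale_zero [simp]: "fun_scale c 0 = 0"
  by (auto simp: fun_scale_def fun_eq_iff fun_ops_apply)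

lemma fun_scale_minus_one: "fun_scale (-1) f = - f"
  by (auto simp: fun_scale_def fun_eq_iff fun_ops_apply)

lemma sum_indicator_mult:
  fixes f :: "'a \<Rightarrow> 'b::comm_semiring_1"
  assumes "finite A"
  shows "(\<Sum>y\<in>A. indicator {g} y * f y) = (if g \<in> A then f g else 0)"
proof -
  have "(\<Sum>y\<in>A. indicator {g} y * f y) = (\<Sum>y\<in>A. if y = g then f y else 0)"
    by (rule sum.cong) (auto simp: indicator_def)
  with assms show ?thesis by (simp add: sum.delta)
qed

lemma sum_mult_indicator:
  fixes f :: "'a \<Rightarrow> 'b::comm_semiring_1"
  shows "finite A \<Longrightarrow> (\<Sum>y\<in>A. f y * indicator {g} y) = (if g \<in> A then f g else 0)"
  using sum_indicator_mult[of A g f] by (simp add: mult.commute)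

lemma ga_mult_add_left: "ga_mult G (f + g) h = ga_mult G f h + ga_mult G g h"
  by (auto simp: ga_mult_def fun_eq_iff fun_ops_apply distrib_right sum.distrib)

lemma ga_mult_add_right: "ga_mult G h (f + g) = ga_mult G h f + ga_mult G h g"
  by (auto simp: ga_mult_def fun_eq_iff fun_ops_apply distrib_left sum.distrib)

lemma ga_mult_diff_left: "ga_mult G (f - g) h = ga_mult G f h - ga_mult G g h"
  by (auto simp: ga_mult_def fun_eq_iff fun_ops_apply left_diff_distrib sum_subtractf)

lemma ga_mult_diff_right: "ga_mult G h (f - g) = ga_mult G h f - ga_mult G h g"
  by (auto simp: ga_mult_def fun_eq_iff fun_ops_apply right_diff_distrib sum_subtractf)

lemma ga_mult_zero_left [simp]: "ga_mult G 0 h = 0"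
  by (auto simp: ga_mult_def fun_eq_iff fun_ops_apply)

lemma ga_mult_zero_right [simp]: "ga_mult G h 0 = 0"
  by (auto simp: ga_mult_def fun_eq_iff fun_ops_apply)

lemma ga_mult_scale_left: "ga_mult G (fun_scale c f) h = fun_scale c (ga_mult G f h)"
  by (auto simp: ga_mult_def fun_eq_iff fun_ops_apply fun_scale_def sum_distrib_left mult.assoc)

lemma ga_mult_scale_right: "ga_mult G f (fun_scale c h) = fun_scale c (ga_mult G f h)"
  by (auto simp: ga_mult_def fun_eq_iff fun_scale_def sum_distrib_left mult.left_commute)

lemma ga_mult_sum_left: "ga_mult G (sum f A) h = (\<Sum>a\<in>A. ga_mult G (f a) h)"
  by (induction A rule: infinite_finite_induct) (simp_all add: ga_mult_add_left)

lemma ga_mult_sum_right: "ga_mult G h (sum f A) = (\<Sum>a\<in>A. ga_mult G h (f a))"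
  by (induction A rule: infinite_finite_induct) (simp_all add: ga_mult_add_right)

lemma ga_mult_in_grp_alg: "ga_mult G f h \<in> grp_alg G"
  by (auto simp: ga_mult_def grp_alg_def)

context group
begin

lemma inv_mult_cancel_left [simp]: "a \<in> carrier G \<Longrightarrow> b \<in> carrier G \<Longrightarrow> inv a \<otimes> (a \<otimes> b) = b"
  by (simp add: m_assoc[symmetric])

lemma mult_inv_cancel_left [simp]: "a \<in> carrier G \<Longrightarrow> b \<in> carrier G \<Longrightarrow> a \<otimes> (inv a \<otimes> b) = b"
  by (simp add: m_assoc[symmetric])

lemma subgroup_comm_subgroup:
  assumes "L \<subseteq> carrier G" and "N \<subseteq> carrier G"
  shows "subgroup (comm_subgroup G L N) G"
  unfolding comm_subgroup_def using assms by (intro generate_is_subgroup) blast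

lemma subgroup_rel_lcs:
  assumes "N \<subseteq> carrier G"
  shows "subgroup (rel_lcs G N i) G"
proof -
  have "subgroup (rel_lcs G N i) G \<and> subgroup (rel_lcs G N (Suc i)) G"
  proof (induction i)
    case (Suc i)
    then show ?case
      using subgroup_comm_subgroup[OF subgroup.subset assms] by simp
  qed (simp add: subgroup_self)
  then show ?thesis ..
qed

end

locale finite_group = group G for G (structure) +
  assumes finite_carrier: "finite (carrier G)"

context finite_group
begin

lemma ga_mult_assoc: "ga_mult G (ga_mult G a b) c = ga_mult G a (ga_mult G b c)"
proof (rule ext)
  fix x
  show "ga_mult G (ga_mult G a b) c x = ga_mult G a (ga_mult G b c) x"
  proof (cases "x \<in> carrier G")
    case False thus ?thesis by (simp add: ga_mult_def)
  next
    case x: True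
    have "ga_mult G (ga_mult G a b) c x
        = (\<Sum>z\<in>carrier G. \<Sum>y\<in>carrier G. a z * b (inv z \<otimes> y) * c (inv y \<otimes> x))"
      unfolding ga_mult_def using x by (simp add: sum_distrib_right) (rule sum.swap)
    also have "\<dots> = (\<Sum>z\<in>carrier G. \<Sum>w\<in>carrier G. a z * b w * c (inv w \<otimes> (inv z \<otimes> x)))"
    proof (rule sum.cong[OF refl])
      fix z assume z: "z \<in> carrier G"
      show "(\<Sum>y\<in>carrier G. a z * b (inv z \<otimes> y) * c (inv y \<otimes> x)) =
            (\<Sum>w\<in>carrier G. a z * b w * c (inv w \<otimes> (inv z \<otimes> x)))"
        using z x
        by (intro sum.reindex_bij_witness[where i="\<lambda>w. z \<otimes> w" and j="\<lambda>y. inv z \<otimes> y"])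
           (auto simp: inv_mult_group m_assoc)
    qed
    also have "\<dots> = ga_mult G a (ga_mult G b c) x"
      by (simp add: ga_mult_def x sum_distrib_left mult.assoc)
    finally show ?thesis .
  qed
qed

text \<open>The group element \<open>g\<close>, as a basis vector of \<open>kG\<close>, is \<open>indicator {g}\<close>.\<close>

lemma indicator_in_grp_alg: "g \<in> carrier G \<Longrightarrow> (indicator {g} :: 'a \<Rightarrow> 'k::field) \<in> grp_alg G"
  by (auto simp: grp_alg_def indicator_def)

lemma ga_mult_indicator_left_apply:
  "g \<in> carrier G \<Longrightarrow> x \<in> carrier G \<Longrightarrow> ga_mult G (indicator {g}) f x = f (inv g \<otimes> x)"
  by (simp add: ga_mult_def sum_indicator_mult finite_carrier)

lemma ga_mult_indicator:
  assumes "g \<in> carrier G" and "h \<in> carrier G"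
  shows "ga_mult G (indicator {g}) (indicator {h}) = (indicator {g \<otimes> h} :: 'a \<Rightarrow> 'k::field)"
proof (rule ext)
  fix x
  show "ga_mult G (indicator {g}) (indicator {h}) x = (indicator {g \<otimes> h} x :: 'k)"
    using assms
    by (cases "x \<in> carrier G")
       (auto simp: ga_mult_indicator_left_apply indicator_def inv_solve_left, auto simp: ga_mult_def)
qed

lemma ga_mult_one_left:
  assumes "f \<in> grp_alg G"
  shows "ga_mult G (indicator {\<one>}) f = f"
proof (rule ext)
  fix x
  show "ga_mult G (indicator {\<one>}) f x = f x"
    using assms by (cases "x \<in> carrier G") (auto simp: ga_mult_indicator_left_apply, auto simp: ga_mult_def grp_alg_def)
qed

lemma ga_mult_one_right:
  fixes f :: "'a \<Rightarrow> 'k::field"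
  assumes "f \<in> grp_alg G"
  shows "ga_mult G f (indicator {\<one>}) = f"
proof (rule ext)
  fix x
  show "ga_mult G f (indicator {\<one>}) x = f x"
  proof (cases "x \<in> carrier G")
    case True
    have "\<And>y. y \<in> carrier G \<Longrightarrow> (indicator {\<one>} (inv y \<otimes> x) :: 'k) = indicator {x} y"
      using True by (auto simp: indicator_def) (metis inv_solve_left one_closed r_one)
    then have "ga_mult G f (indicator {\<one>}) x = (\<Sum>y\<in>carrier G. f y * indicator {x} y)"
      using True by (simp add: ga_mult_def cong: sum.cong)
    with True show ?thesis by (simp add: sum_mult_indicator finite_carrier)
  qed (use assms in \<open>auto simp: ga_mult_def grp_alg_def\<close>)
qed

end

section \<open>Products and sums of subspaces\<close>

definition add_closed :: "('g \<Rightarrow> 'k::field) set \<Rightarrow> bool" where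
  "add_closed C \<longleftrightarrow> 0 \<in> C \<and> (\<forall>x\<in>C. \<forall>y\<in>C. x + y \<in> C)"

definition scale_closed :: "('g \<Rightarrow> 'k::field) set \<Rightarrow> bool" where
  "scale_closed C \<longleftrightarrow> (\<forall>c. \<forall>x\<in>C. fun_scale c x \<in> C)"

lemma add_closed_zero: "add_closed C \<Longrightarrow> 0 \<in> C"
  and add_closed_add: "add_closed C \<Longrightarrow> x \<in> C \<Longrightarrow> y \<in> C \<Longrightarrow> x + y \<in> C"
  unfolding add_closed_def by auto

lemma scale_closedD: "scale_closed C \<Longrightarrow> x \<in> C \<Longrightarrow> fun_scale c x \<in> C"
  unfolding scale_closed_def by auto

lemma add_closed_sum:
  assumes "add_closed C" and "\<And>i. i \<in> F \<Longrightarrow> v i \<in> C"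
  shows "sum v F \<in> C"
  using assms(2)
  by (induction F rule: infinite_finite_induct) (simp_all add: assms(1) add_closed_zero add_closed_add)

lemma lin_comb_mem:
  assumes "add_closed C" and "scale_closed C" and "\<And>i. i \<in> F \<Longrightarrow> v i \<in> C"
  shows "(\<Sum>i\<in>F. fun_scale (c i) (v i)) \<in> C"
  using assms by (intro add_closed_sum) (auto simp: scale_closedD)

lemma scale_closed_grp_alg: "scale_closed (grp_alg G)"
  unfolding scale_closed_def grp_alg_def fun_scale_def by auto

lemma add_closed_aug_ideal: "add_closed (aug_ideal G H)"
  unfolding add_closed_def aug_ideal_def grp_alg_def by (auto simp: fun_ops_apply sum.distrib)

lemma scale_closed_aug_ideal: "scale_closed (aug_ideal G H)"
  unfolding scale_closed_def aug_ideal_def grp_alg_def fun_scale_def by (auto simp: sum_distrib_left[symmetric])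

lemma sp_mult_zero: "0 \<in> sp_mult G A B"
  unfolding sp_mult_def by (rule CollectI, rule exI[of _ 0]) (auto simp: zero_fun_def)

lemma sp_mult_add_prod:
  assumes "f \<in> sp_mult G A B" and "a0 \<in> A" and "b0 \<in> B"
  shows "f + ga_mult G a0 b0 \<in> sp_mult G A B"
proof -
  obtain n :: nat and a b where ab: "\<forall>i<n. a i \<in> A \<and> b i \<in> B"
    and f: "f = (\<lambda>x. \<Sum>i<n. ga_mult G (a i) (b i) x)"
    using assms(1) unfolding sp_mult_def by blast
  have "\<forall>i<Suc n. (a(n := a0)) i \<in> A \<and> (b(n := b0)) i \<in> B"
    using ab assms by (auto simp: less_Suc_eq)
  moreover have "f + ga_mult G a0 b0 = (\<lambda>x. \<Sum>i<Suc n. ga_mult G ((a(n := a0)) i) ((b(n := b0)) i) x)"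
    unfolding f by (auto simp: fun_eq_iff fun_ops_apply intro!: sum.cong)
  ultimately show ?thesis unfolding sp_mult_def by blast
qed

lemma sp_mult_prod: "a \<in> A \<Longrightarrow> b \<in> B \<Longrightarrow> ga_mult G a b \<in> sp_mult G A B"
  using sp_mult_add_prod[OF sp_mult_zero] by fastforce

lemma sp_mult_induct [consumes 1, case_names zero prod add]:
  assumes "f \<in> sp_mult G A B"
    and "P 0"
    and "\<And>a b. a \<in> A \<Longrightarrow> b \<in> B \<Longrightarrow> P (ga_mult G a b)"
    and "\<And>f g. P f \<Longrightarrow> P g \<Longrightarrow> P (f + g)"
  shows "P f"
proof -
  obtain n :: nat and a b where ab: "\<forall>i<n. a i \<in> A \<and> b i \<in> B"
    and f: "f = (\<lambda>x. \<Sum>i<n. ga_mult G (a i) (b i) x)"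
    using assms(1) unfolding sp_mult_def by blast
  have "P (\<lambda>x. \<Sum>i<m. ga_mult G (a i) (b i) x)" if "m \<le> n" for m
    using that
  proof (induction m)
    case 0 thus ?case using assms(2) by (simp add: zero_fun_def)
  next
    case (Suc m)
    have "(\<lambda>x. \<Sum>i<Suc m. ga_mult G (a i) (b i) x) =
          (\<lambda>x. \<Sum>i<m. ga_mult G (a i) (b i) x) + ga_mult G (a m) (b m)"
      by (simp add: fun_eq_iff plus_fun_apply)
    thus ?case using Suc ab assms(3,4) by simp
  qed
  thus ?thesis using f by simp
qed

lemma sp_mult_add:
  assumes "f \<in> sp_mult G A B" and "g \<in> sp_mult G A B"
  shows "f + g \<in> sp_mult G A B"
  using assms(2) assms(1)
proof (induction g arbitrary: f rule: sp_mult_induct)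
  case (add g h)
  then show ?case by (metis add.assoc)
qed (simp_all add: sp_mult_add_prod)

lemma add_closed_sp_mult: "add_closed (sp_mult G A B)"
  unfolding add_closed_def using sp_mult_zero sp_mult_add by blast

lemma scale_closed_sp_mult:
  assumes "scale_closed B"
  shows "scale_closed (sp_mult G A B)"
  unfolding scale_closed_def
proof (intro allI ballI)
  fix c f assume "f \<in> sp_mult G A B"
  then show "fun_scale c f \<in> sp_mult G A B"
    by (induction f rule: sp_mult_induct)
       (use assms in \<open>auto simp: sp_mult_zero ga_mult_scale_right[symmetric] fun_scale_add
                          scale_closedD sp_mult_add sp_mult_prod\<close>)
qed

lemma sp_mult_least:
  assumes "add_closed C" and "\<And>a b. a \<in> A \<Longrightarrow> b \<in> B \<Longrightarrow> ga_mult G a b \<in> C"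
  shows "sp_mult G A B \<subseteq> C"
proof
  fix f assume "f \<in> sp_mult G A B"
  then show "f \<in> C"
    by (induction f rule: sp_mult_induct) (use assms in \<open>auto intro: add_closed_zero add_closed_add\<close>)
qed

lemma sp_mult_mono: "A \<subseteq> A' \<Longrightarrow> B \<subseteq> B' \<Longrightarrow> sp_mult G A B \<subseteq> sp_mult G A' B'"
  by (rule sp_mult_least[OF add_closed_sp_mult]) (auto intro: sp_mult_prod)

lemma (in finite_group) sp_mult_assoc: "sp_mult G (sp_mult G A B) C = sp_mult G A (sp_mult G B C)"
proof
  show "sp_mult G (sp_mult G A B) C \<subseteq> sp_mult G A (sp_mult G B C)"
  proof (rule sp_mult_least[OF add_closed_sp_mult])
    fix x c assume "x \<in> sp_mult G A B" and c: "c \<in> C"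
    then show "ga_mult G x c \<in> sp_mult G A (sp_mult G B C)"
      by (induction x rule: sp_mult_induct)
         (simp_all add: sp_mult_zero ga_mult_assoc sp_mult_prod ga_mult_add_left sp_mult_add)
  qed
  show "sp_mult G A (sp_mult G B C) \<subseteq> sp_mult G (sp_mult G A B) C"
  proof (rule sp_mult_least[OF add_closed_sp_mult])
    fix a x assume "x \<in> sp_mult G B C" and a: "a \<in> A"
    then show "ga_mult G a x \<in> sp_mult G (sp_mult G A B) C"
      by (induction x rule: sp_mult_induct)
         (simp_all add: a sp_mult_zero ga_mult_assoc[symmetric] sp_mult_prod ga_mult_add_right sp_mult_add)
  qed
qed

lemma sp_plus_eq: "sp_plus A B = {a + b | a b. a \<in> A \<and> b \<in> B}"
  unfolding sp_plus_def plus_fun_def ..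

lemma sp_plusI: "a \<in> A \<Longrightarrow> b \<in> B \<Longrightarrow> a + b \<in> sp_plus A B"
  unfolding sp_plus_eq by blast

lemma sp_plusE:
  assumes "x \<in> sp_plus A B"
  obtains a b where "a \<in> A" "b \<in> B" "x = a + b"
  using assms unfolding sp_plus_eq by blast

lemma add_closed_sp_plus:
  assumes "add_closed A" and "add_closed B"
  shows "add_closed (sp_plus A B)"
  unfolding add_closed_def
proof (intro conjI ballI)
  show "0 \<in> sp_plus A B"
    using sp_plusI[of 0 A 0 B] assms by (simp add: add_closed_zero)
  fix x y assume "x \<in> sp_plus A B" "y \<in> sp_plus A B"
  then obtain a1 b1 a2 b2 where "a1 \<in> A" "b1 \<in> B" "a2 \<in> A" "b2 \<in> B" "x = a1 + b1" "y = a2 + b2"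
    by (meson sp_plusE)
  moreover have "a1 + b1 + (a2 + b2) = (a1 + a2) + (b1 + b2)"
    by (simp add: algebra_simps)
  ultimately show "x + y \<in> sp_plus A B"
    using assms by (metis sp_plusI add_closed_add)
qed

lemma scale_closed_sp_plus: "scale_closed A \<Longrightarrow> scale_closed B \<Longrightarrow> scale_closed (sp_plus A B)"
  unfolding scale_closed_def by (auto elim!: sp_plusE simp: fun_scale_add intro!: sp_plusI)

lemma sp_plus_least: "add_closed C \<Longrightarrow> A \<subseteq> C \<Longrightarrow> B \<subseteq> C \<Longrightarrow> sp_plus A B \<subseteq> C"
  unfolding sp_plus_eq by (auto intro: add_closed_add)

lemma sp_plus_upper1: "0 \<in> B \<Longrightarrow> A \<subseteq> sp_plus A B"
  using sp_plusI[of _ A 0 B] by auto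

lemma sp_plus_upper2: "0 \<in> A \<Longrightarrow> B \<subseteq> sp_plus A B"
  using sp_plusI[of 0 A _ B] by auto

lemma sp_plus_zero_left [simp]: "sp_plus {0} A = A"
  unfolding sp_plus_eq by auto

lemma sp_plus_eqI:
  assumes "add_closed A" and "add_closed B" and "add_closed C"
    and "A \<subseteq> sp_plus B C" and "B \<subseteq> sp_plus A C"
  shows "sp_plus A C = sp_plus B C"
  using assms by (intro antisym sp_plus_least add_closed_sp_plus sp_plus_upper2) (auto simp: add_closed_zero)

lemma sp_mult_plus_right: "sp_mult G A (sp_plus B C) \<subseteq> sp_plus (sp_mult G A B) (sp_mult G A C)"
  by (rule sp_mult_least[OF add_closed_sp_plus[OF add_closed_sp_mult add_closed_sp_mult]])
     (auto elim!: sp_plusE simp: ga_mult_add_right sp_plusI sp_mult_prod)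

lemma sp_mult_plus_left: "sp_mult G (sp_plus B C) A \<subseteq> sp_plus (sp_mult G B A) (sp_mult G C A)"
  by (rule sp_mult_least[OF add_closed_sp_plus[OF add_closed_sp_mult add_closed_sp_mult]])
     (auto elim!: sp_plusE simp: ga_mult_add_left sp_plusI sp_mult_prod)

lemma ga_mult_lin_comb_mem:
  assumes "add_closed W" and "scale_closed W" and "finite F1" and "finite F2"
    and "\<And>i j. i \<in> F1 \<Longrightarrow> j \<in> F2 \<Longrightarrow> ga_mult G (u i) (v j) \<in> W"
  shows "ga_mult G (\<Sum>i\<in>F1. fun_scale (c i) (u i)) (\<Sum>j\<in>F2. fun_scale (d j) (v j)) \<in> W"
proof -
  have "ga_mult G (\<Sum>i\<in>F1. fun_scale (c i) (u i)) (\<Sum>j\<in>F2. fun_scale (d j) (v j))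
      = (\<Sum>i\<in>F1. fun_scale (c i) (ga_mult G (u i) (\<Sum>j\<in>F2. fun_scale (d j) (v j))))"
    by (simp only: ga_mult_sum_left ga_mult_scale_left)
  also have "\<dots> = (\<Sum>i\<in>F1. fun_scale (c i) (\<Sum>j\<in>F2. fun_scale (d j) (ga_mult G (u i) (v j))))"
    by (simp only: ga_mult_sum_right ga_mult_scale_right)
  also have "\<dots> \<in> W"
    using assms by (intro lin_comb_mem) (auto intro!: lin_comb_mem)
  finally show ?thesis .
qed

section \<open>Augmentation ideals and commutators\<close>

definition aug_gen :: "('g, 'b) monoid_scheme \<Rightarrow> 'g \<Rightarrow> 'g \<Rightarrow> 'k::field" where
  "aug_gen G h = indicator {h} - indicator {\<one>\<^bsub>G\<^esub>}"

definition aug_right_ideal :: "('g, 'b) monoid_scheme \<Rightarrow> 'g set \<Rightarrow> ('g \<Rightarrow> 'k::field) set" where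
  "aug_right_ideal G H = sp_mult G (aug_ideal G H) (grp_alg G)"

definition aug_prod_ideal :: "('g, 'b) monoid_scheme \<Rightarrow> 'g set \<Rightarrow> 'g set \<Rightarrow> ('g \<Rightarrow> 'k::field) set" where
  "aug_prod_ideal G L N = sp_mult G (sp_mult G (aug_ideal G L) (aug_ideal G N)) (grp_alg G)"

lemma add_closed_aug_right_ideal: "add_closed (aug_right_ideal G H)"
  and scale_closed_aug_right_ideal: "scale_closed (aug_right_ideal G H)"
  and add_closed_aug_prod_ideal: "add_closed (aug_prod_ideal G L N)"
  and scale_closed_aug_prod_ideal: "scale_closed (aug_prod_ideal G L N)"
  unfolding aug_right_ideal_def aug_prod_ideal_def
  by (simp_all add: add_closed_sp_mult scale_closed_sp_mult scale_closed_grp_alg)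

context finite_group
begin

lemma aug_gen_one [simp]: "aug_gen G \<one> = 0"
  by (simp add: aug_gen_def)

lemma aug_gen_mem:
  assumes "subgroup H G" and "h \<in> H"
  shows "aug_gen G h \<in> aug_ideal G H"
proof -
  have "H \<subseteq> carrier G" and "\<one> \<in> H"
    using assms(1) by (auto dest: subgroup.subset subgroup.one_closed)
  moreover have "finite H"
    using \<open>H \<subseteq> carrier G\<close> finite_carrier finite_subset by blast
  ultimately show ?thesis
    using assms(2) unfolding aug_ideal_def grp_alg_def aug_gen_def
    by (auto simp: fun_ops_apply sum_subtractf indicator_def sum.If_cases)
qed

lemma aug_ideal_expansion:
  assumes "H \<subseteq> carrier G" and "a \<in> aug_ideal G H"
  shows "a = (\<Sum>h\<in>H. fun_scale (a h) (aug_gen G h))"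
proof (rule ext)
  fix x
  have fin: "finite H"
    using assms(1) finite_carrier finite_subset by blast
  have "sum a H = 0" and supp: "\<And>x. x \<notin> H \<Longrightarrow> a x = 0"
    using assms(2) unfolding aug_ideal_def by auto
  then have "(\<Sum>h\<in>H. fun_scale (a h) (aug_gen G h)) x = (\<Sum>h\<in>H. a h * indicator {h} x)"
    by (simp add: sum_fun_apply fun_scale_def aug_gen_def fun_ops_apply right_diff_distrib
        sum_subtractf sum_distrib_right[symmetric])
  also have "\<dots> = (\<Sum>h\<in>H. indicator {x} h * a h)"
    by (auto simp: indicator_def intro: sum.cong)
  also have "\<dots> = a x"
    using fin supp by (cases "x \<in> H") (auto simp: sum_indicator_mult)
  finally show "a x = (\<Sum>h\<in>H. fun_scale (a h) (aug_gen G h)) x" ..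
qed

lemma grp_alg_expansion:
  assumes "a \<in> grp_alg G"
  shows "a = (\<Sum>g\<in>carrier G. fun_scale (a g) (indicator {g}))"
proof (rule ext)
  fix x
  have "(\<Sum>g\<in>carrier G. fun_scale (a g) (indicator {g})) x = (\<Sum>g\<in>carrier G. indicator {x} g * a g)"
    by (auto simp: sum_fun_apply fun_scale_def indicator_def intro: sum.cong)
  also have "\<dots> = a x"
    using assms finite_carrier by (cases "x \<in> carrier G") (auto simp: sum_indicator_mult grp_alg_def)
  finally show "a x = (\<Sum>g\<in>carrier G. fun_scale (a g) (indicator {g})) x" ..
qed

lemma aug_gen_mult_indicator:
  "h \<in> carrier G \<Longrightarrow> g \<in> carrier G \<Longrightarrow>
    ga_mult G (aug_gen G h) (indicator {g}) = indicator {h \<otimes> g} - (indicator {g} :: 'a \<Rightarrow> 'k::field)"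
  by (simp add: aug_gen_def ga_mult_diff_left ga_mult_indicator)

lemma indicator_mult_aug_gen:
  "g \<in> carrier G \<Longrightarrow> h \<in> carrier G \<Longrightarrow>
    ga_mult G (indicator {g}) (aug_gen G h) = indicator {g \<otimes> h} - (indicator {g} :: 'a \<Rightarrow> 'k::field)"
  by (simp add: aug_gen_def ga_mult_diff_right ga_mult_indicator)

lemma aug_gen_commutator:
  assumes "l \<in> carrier G" and "n \<in> carrier G"
  shows "ga_mult G (aug_gen G l) (aug_gen G n) - ga_mult G (aug_gen G n) (aug_gen G l)
       = ga_mult G (aug_gen G (l \<otimes> n \<otimes> inv l \<otimes> inv n)) (indicator {n \<otimes> l} :: 'a \<Rightarrow> 'k::field)"
proof -
  have "l \<otimes> n \<otimes> inv l \<otimes> inv n \<otimes> (n \<otimes> l) = l \<otimes> n"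
    using assms by (simp add: m_assoc)
  with assms show ?thesis
    by (simp add: aug_gen_mult_indicator aug_gen_def ga_mult_diff_left ga_mult_diff_right
        ga_mult_indicator algebra_simps)
qed

lemma aug_gen_mult:
  "h1 \<in> carrier G \<Longrightarrow> h2 \<in> carrier G \<Longrightarrow>
    aug_gen G (h1 \<otimes> h2) = ga_mult G (aug_gen G h1) (indicator {h2}) + (aug_gen G h2 :: 'a \<Rightarrow> 'k::field)"
  by (simp add: aug_gen_mult_indicator) (simp add: aug_gen_def)

lemma aug_gen_inv:
  "h \<in> carrier G \<Longrightarrow> aug_gen G (inv h) = - ga_mult G (aug_gen G h) (indicator {inv h} :: 'a \<Rightarrow> 'k::field)"
  by (simp add: aug_gen_mult_indicator) (simp add: aug_gen_def)

lemma aug_gen_mult_aug_gen_mem: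
  assumes L: "subgroup L G" and N: "subgroup N G"
    and l: "l \<in> L" and n: "n \<in> N" and r: "r \<in> grp_alg G"
  shows "ga_mult G (aug_gen G l) (ga_mult G (aug_gen G n) r)
           \<in> sp_plus (aug_right_ideal G (comm_subgroup G L N)) (aug_prod_ideal G N L :: ('a \<Rightarrow> 'k::field) set)"
proof -
  have lc: "l \<in> carrier G" and nc: "n \<in> carrier G"
    using L N l n subgroup.subset by blast+
  then have "ga_mult G (aug_gen G l) (ga_mult G (aug_gen G n) r)
      = ga_mult G (aug_gen G (l \<otimes> n \<otimes> inv l \<otimes> inv n)) (ga_mult G (indicator {n \<otimes> l}) r)
        + ga_mult G (ga_mult G (aug_gen G n) (aug_gen G l)) r"
    by (simp add: ga_mult_assoc[symmetric] aug_gen_commutator[symmetric] ga_mult_diff_left)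
  moreover have "l \<otimes> n \<otimes> inv l \<otimes> inv n \<in> comm_subgroup G L N"
    using l n unfolding comm_subgroup_def by (blast intro: generate.incl)
  ultimately show ?thesis
    unfolding aug_right_ideal_def aug_prod_ideal_def
    using L N l n r subgroup.subset[OF L] subgroup.subset[OF N]
    by (auto intro!: sp_plusI sp_mult_prod aug_gen_mem subgroup_comm_subgroup ga_mult_in_grp_alg)
qed

lemma aug_prod_subset_aug_commutator:
  assumes L: "subgroup L G" and N: "subgroup N G"
  shows "aug_prod_ideal G L N
           \<subseteq> sp_plus (aug_right_ideal G (comm_subgroup G L N)) (aug_prod_ideal G N L :: ('a \<Rightarrow> 'k::field) set)"
    (is "_ \<subseteq> ?W")
  unfolding aug_prod_ideal_def[of G L N]
proof (rule sp_mult_least)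
  have Lc: "L \<subseteq> carrier G" and Nc: "N \<subseteq> carrier G"
    using L N subgroup.subset by blast+
  show W: "add_closed ?W"
    by (intro add_closed_sp_plus add_closed_aug_right_ideal add_closed_aug_prod_ideal)
  have W': "scale_closed ?W"
    by (intro scale_closed_sp_plus scale_closed_aug_right_ideal scale_closed_aug_prod_ideal)
  fix w r :: "'a \<Rightarrow> 'k"
  assume "w \<in> sp_mult G (aug_ideal G L) (aug_ideal G N)" and r: "r \<in> grp_alg G"
  then show "ga_mult G w r \<in> ?W"
  proof (induction w rule: sp_mult_induct)
    case (prod a b)
    have "ga_mult G b r = (\<Sum>n\<in>N. fun_scale (b n) (ga_mult G (aug_gen G n) r))"
      using arg_cong[where f="\<lambda>x. ga_mult G x r", OF aug_ideal_expansion[OF Nc prod(2)]]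
      by (simp only: ga_mult_sum_left ga_mult_scale_left)
    then have "ga_mult G (ga_mult G a b) r
        = ga_mult G a (\<Sum>n\<in>N. fun_scale (b n) (ga_mult G (aug_gen G n) r))"
      by (simp only: ga_mult_assoc)
    also have "\<dots> = ga_mult G (\<Sum>l\<in>L. fun_scale (a l) (aug_gen G l))
                      (\<Sum>n\<in>N. fun_scale (b n) (ga_mult G (aug_gen G n) r))"
      by (rule arg_cong[where f="\<lambda>x. ga_mult G x _"]) (rule aug_ideal_expansion[OF Lc prod(1)])
    also have "\<dots> \<in> ?W"
      using Lc Nc finite_carrier r aug_gen_mult_aug_gen_mem[OF L N]
      by (intro ga_mult_lin_comb_mem W W') (auto intro: finite_subset)
    finally show ?case .
  qed (use W in \<open>auto simp: ga_mult_add_left intro: add_closed_zero add_closed_add\<close>)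
qed

lemma aug_gen_commutator_mem:
  assumes L: "subgroup L G" and N: "subgroup N G"
    and l: "l \<in> L" and n: "n \<in> N" and r: "r \<in> grp_alg G"
  shows "ga_mult G (aug_gen G (l \<otimes> n \<otimes> inv l \<otimes> inv n)) r
           \<in> sp_plus (aug_prod_ideal G L N) (aug_prod_ideal G N L :: ('a \<Rightarrow> 'k::field) set)"
proof -
  have lc: "l \<in> carrier G" and nc: "n \<in> carrier G"
    using L N l n subgroup.subset by blast+
  define r' where "r' = ga_mult G (indicator {inv (n \<otimes> l)}) r"
  have r': "r' \<in> grp_alg G"
    unfolding r'_def by (rule ga_mult_in_grp_alg)
  have "r = ga_mult G (indicator {n \<otimes> l}) r'"
    unfolding r'_def using lc nc r
    by (simp add: ga_mult_assoc[symmetric] ga_mult_indicator ga_mult_one_left)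
  then have "ga_mult G (aug_gen G (l \<otimes> n \<otimes> inv l \<otimes> inv n)) r
      = ga_mult G (ga_mult G (aug_gen G l) (aug_gen G n) - ga_mult G (aug_gen G n) (aug_gen G l)) r'"
    using lc nc by (simp add: aug_gen_commutator ga_mult_assoc)
  also have "\<dots> = ga_mult G (ga_mult G (aug_gen G l) (aug_gen G n)) r'
                  + fun_scale (-1) (ga_mult G (ga_mult G (aug_gen G n) (aug_gen G l)) r')"
    by (simp add: ga_mult_diff_left fun_scale_minus_one)
  also have "\<dots> \<in> sp_plus (aug_prod_ideal G L N) (aug_prod_ideal G N L)"
    unfolding aug_prod_ideal_def using L N l n r'
    by (auto intro!: sp_plusI sp_mult_prod aug_gen_mem
        scale_closedD[OF scale_closed_sp_mult[OF scale_closed_grp_alg]])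
  finally show ?thesis .
qed

lemma aug_gen_comm_subgroup_mem:
  assumes L: "subgroup L G" and N: "subgroup N G"
    and h: "h \<in> comm_subgroup G L N" and r: "r \<in> grp_alg G"
  shows "ga_mult G (aug_gen G h) r \<in> sp_plus (aug_prod_ideal G L N) (aug_prod_ideal G N L :: ('a \<Rightarrow> 'k::field) set)"
    (is "_ \<in> ?W")
proof -
  have Lc: "L \<subseteq> carrier G" and Nc: "N \<subseteq> carrier G"
    using L N subgroup.subset by blast+
  have W: "add_closed ?W" "scale_closed ?W"
    by (intro add_closed_sp_plus scale_closed_sp_plus add_closed_aug_prod_ideal
        scale_closed_aug_prod_ideal)+
  from h r show ?thesis
    unfolding comm_subgroup_def
  proof (induction h arbitrary: r rule: generate.induct)
    case one
    then show ?case using W by (simp add: add_closed_zero)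
  next
    case (incl h)
    then show ?case using aug_gen_commutator_mem[OF L N] by blast
  next
    case (inv h)
    then obtain l n where "l \<in> L" "n \<in> N" and h: "h = l \<otimes> n \<otimes> inv l \<otimes> inv n"
      by blast
    then have "h \<in> carrier G" using Lc Nc by blast
    then have "ga_mult G (aug_gen G (inv h)) r
        = fun_scale (-1) (ga_mult G (aug_gen G h) (ga_mult G (indicator {inv h}) r))"
      by (simp add: aug_gen_inv fun_scale_minus_one ga_mult_assoc ga_mult_diff_left[of G 0, simplified])
    then show ?case
      using scale_closedD[OF W(2) aug_gen_commutator_mem[OF L N \<open>l \<in> L\<close> \<open>n \<in> N\<close> ga_mult_in_grp_alg]] h
      by simp
  next
    case (eng h1 h2)
    have "h1 \<in> carrier G" "h2 \<in> carrier G"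
      using eng.hyps subgroup.subset[OF subgroup_comm_subgroup[OF Lc Nc]]
      unfolding comm_subgroup_def by blast+
    then have "ga_mult G (aug_gen G (h1 \<otimes> h2)) r
        = ga_mult G (aug_gen G h1) (ga_mult G (indicator {h2}) r) + ga_mult G (aug_gen G h2) r"
      by (simp add: aug_gen_mult ga_mult_add_left ga_mult_assoc)
    then show ?case
      using eng.IH eng.prems W(1) by (simp add: add_closed_add ga_mult_in_grp_alg)
  qed
qed

lemma aug_commutator_subset_aug_prod:
  assumes L: "subgroup L G" and N: "subgroup N G"
  shows "aug_right_ideal G (comm_subgroup G L N)
           \<subseteq> sp_plus (aug_prod_ideal G L N) (aug_prod_ideal G N L :: ('a \<Rightarrow> 'k::field) set)"
    (is "_ \<subseteq> ?W")
  unfolding aug_right_ideal_def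
proof (rule sp_mult_least)
  show W: "add_closed ?W"
    by (intro add_closed_sp_plus add_closed_aug_prod_ideal)
  fix a r :: "'a \<Rightarrow> 'k"
  assume a: "a \<in> aug_ideal G (comm_subgroup G L N)" and r: "r \<in> grp_alg G"
  have "comm_subgroup G L N \<subseteq> carrier G"
    using L N by (intro subgroup.subset subgroup_comm_subgroup) (auto dest: subgroup.subset)
  then have "ga_mult G a r = (\<Sum>h\<in>comm_subgroup G L N. fun_scale (a h) (ga_mult G (aug_gen G h) r))"
    using arg_cong[where f="\<lambda>x. ga_mult G x r", OF aug_ideal_expansion[OF _ a]]
    by (simp only: ga_mult_sum_left ga_mult_scale_left)
  also have "\<dots> \<in> ?W"
    using W r aug_gen_comm_subgroup_mem[OF L N]
    by (intro lin_comb_mem scale_closed_sp_plus scale_closed_aug_prod_ideal) auto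
  finally show "ga_mult G a r \<in> ?W" .
qed

lemma aug_commutator_ideal:
  assumes "subgroup L G" and "subgroup N G"
  shows "sp_plus (aug_prod_ideal G L N) (aug_prod_ideal G N L :: ('a \<Rightarrow> 'k::field) set)
       = sp_plus (aug_right_ideal G (comm_subgroup G L N)) (aug_prod_ideal G N L)"
  using assms
  by (intro sp_plus_eqI add_closed_aug_prod_ideal add_closed_aug_right_ideal
      aug_prod_subset_aug_commutator aug_commutator_subset_aug_prod)

lemma indicator_mult_aug_gen_mem:
  assumes H: "H \<lhd> G" and g: "g \<in> carrier G" and h: "h \<in> H"
  shows "ga_mult G (indicator {g}) (aug_gen G h) \<in> sp_mult G (aug_ideal G H) (grp_alg G :: ('a \<Rightarrow> 'k::field) set)"
proof -
  have "h \<in> carrier G"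
    using H h normal_imp_subgroup subgroup.subset by blast
  with g have "ga_mult G (indicator {g}) (aug_gen G h) = ga_mult G (aug_gen G (g \<otimes> h \<otimes> inv g)) (indicator {g})"
    by (simp add: indicator_mult_aug_gen aug_gen_mult_indicator m_assoc)
  also have "\<dots> \<in> sp_mult G (aug_ideal G H) (grp_alg G)"
    using H g h normal_inv_iff
    by (intro sp_mult_prod aug_gen_mem indicator_in_grp_alg normal_imp_subgroup) blast+
  finally show ?thesis .
qed

lemma aug_gen_mult_indicator_mem:
  assumes H: "H \<lhd> G" and g: "g \<in> carrier G" and h: "h \<in> H"
  shows "ga_mult G (aug_gen G h) (indicator {g}) \<in> sp_mult G (grp_alg G) (aug_ideal G H :: ('a \<Rightarrow> 'k::field) set)"
proof -
  have "h \<in> carrier G"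
    using H h normal_imp_subgroup subgroup.subset by blast
  with g have "ga_mult G (aug_gen G h) (indicator {g}) = ga_mult G (indicator {g}) (aug_gen G (inv g \<otimes> h \<otimes> g))"
    by (simp add: indicator_mult_aug_gen aug_gen_mult_indicator m_assoc)
  also have "\<dots> \<in> sp_mult G (grp_alg G) (aug_ideal G H)"
    using H g h normal_inv_iff[of H] inv_inv[OF g]
    by (intro sp_mult_prod aug_gen_mem indicator_in_grp_alg normal_imp_subgroup) (metis inv_closed)+
  finally show ?thesis .
qed

lemma grp_alg_mult_aug_ideal_normal:
  assumes H: "H \<lhd> G"
  shows "sp_mult G (grp_alg G) (aug_ideal G H) = sp_mult G (aug_ideal G H) (grp_alg G :: ('a \<Rightarrow> 'k::field) set)"
proof -
  have Hc: "H \<subseteq> carrier G"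
    using H normal_imp_subgroup subgroup.subset by blast
  then have fin: "finite H"
    using finite_carrier finite_subset by blast
  let ?R = "grp_alg G :: ('a \<Rightarrow> 'k) set" and ?I = "aug_ideal G H :: ('a \<Rightarrow> 'k) set"
  show ?thesis
  proof
    show "sp_mult G ?R ?I \<subseteq> sp_mult G ?I ?R"
    proof (rule sp_mult_least[OF add_closed_sp_mult])
      fix r a assume r: "r \<in> ?R" and a: "a \<in> ?I"
      have "ga_mult G r a = ga_mult G (\<Sum>g\<in>carrier G. fun_scale (r g) (indicator {g}))
                                    (\<Sum>h\<in>H. fun_scale (a h) (aug_gen G h))"
        by (rule arg_cong2[where f="ga_mult G"]) (rule grp_alg_expansion[OF r], rule aug_ideal_expansion[OF Hc a])
      also have "\<dots> \<in> sp_mult G ?I ?R"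
        using finite_carrier fin indicator_mult_aug_gen_mem[OF H]
        by (intro ga_mult_lin_comb_mem add_closed_sp_mult scale_closed_sp_mult scale_closed_grp_alg)
      finally show "ga_mult G r a \<in> sp_mult G ?I ?R" .
    qed
    show "sp_mult G ?I ?R \<subseteq> sp_mult G ?R ?I"
    proof (rule sp_mult_least[OF add_closed_sp_mult])
      fix a r assume a: "a \<in> ?I" and r: "r \<in> ?R"
      have "ga_mult G a r = ga_mult G (\<Sum>h\<in>H. fun_scale (a h) (aug_gen G h))
                                    (\<Sum>g\<in>carrier G. fun_scale (r g) (indicator {g}))"
        by (rule arg_cong2[where f="ga_mult G"]) (rule aug_ideal_expansion[OF Hc a], rule grp_alg_expansion[OF r])
      also have "\<dots> \<in> sp_mult G ?R ?I"
        using finite_carrier fin aug_gen_mult_indicator_mem[OF H]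
        by (intro ga_mult_lin_comb_mem add_closed_sp_mult scale_closed_sp_mult scale_closed_aug_ideal)
      finally show "ga_mult G a r \<in> sp_mult G ?R ?I" .
    qed
  qed
qed

end

section \<open>The ideals \<open>\<J>\<^sup>n(N,G)\<close>\<close>

lemma sp_sum_0 [simp]: "sp_sum f 0 = {0}"
  by (simp add: zero_fun_def)

declare sp_sum.simps(1) [simp del]

lemma add_closed_sp_sum: "(\<And>i. add_closed (f i)) \<Longrightarrow> add_closed (sp_sum f n)"
  by (induction n) (simp_all add: add_closed_sp_plus, simp add: add_closed_def)

lemma sp_sum_least:
  assumes "add_closed C" and "\<And>i. 1 \<le> i \<Longrightarrow> i \<le> n \<Longrightarrow> f i \<subseteq> C"
  shows "sp_sum f n \<subseteq> C"
  using assms(2) by (induction n) (simp_all add: assms(1) add_closed_zero sp_plus_least)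

lemma sp_sum_upper:
  assumes "\<And>i. add_closed (f i)" and "1 \<le> i" and "i \<le> n"
  shows "f i \<subseteq> sp_sum f n"
  using assms(2,3)
proof (induction n)
  case (Suc n)
  have "0 \<in> sp_sum f n" "0 \<in> f (Suc n)"
    using assms(1) by (simp_all add: add_closed_zero add_closed_sp_sum)
  show ?case
  proof (cases "i = Suc n")
    case True
    then show ?thesis using \<open>0 \<in> sp_sum f n\<close> by (simp add: sp_plus_upper2)
  next
    case False
    then have "f i \<subseteq> sp_sum f n" using Suc by simp
    also have "\<dots> \<subseteq> sp_sum f (Suc n)" using \<open>0 \<in> f (Suc n)\<close> by (simp add: sp_plus_upper1)
    finally show ?thesis .
  qed
qed simp

lemma sp_mult_sp_sum_left:
  assumes "add_closed C" and "\<And>i. 1 \<le> i \<Longrightarrow> i \<le> n \<Longrightarrow> sp_mult G A (f i) \<subseteq> C"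
  shows "sp_mult G A (sp_sum f n) \<subseteq> C"
  using assms(2)
proof (induction n)
  case 0
  show ?case by (rule sp_mult_least[OF assms(1)]) (simp add: add_closed_zero[OF assms(1)])
next
  case (Suc n)
  have "sp_mult G A (sp_sum f (Suc n)) \<subseteq> sp_plus (sp_mult G A (sp_sum f n)) (sp_mult G A (f (Suc n)))"
    by (simp add: sp_mult_plus_right)
  also have "\<dots> \<subseteq> C"
    using Suc assms(1) by (intro sp_plus_least) auto
  finally show ?case .
qed

lemma sp_mult_sp_sum_right:
  assumes "add_closed C" and "\<And>i. 1 \<le> i \<Longrightarrow> i \<le> n \<Longrightarrow> sp_mult G (f i) A \<subseteq> C"
  shows "sp_mult G (sp_sum f n) A \<subseteq> C"
  using assms(2)
proof (induction n)
  case 0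
  show ?case by (rule sp_mult_least[OF assms(1)]) (simp add: add_closed_zero[OF assms(1)])
next
  case (Suc n)
  have "sp_mult G (sp_sum f (Suc n)) A \<subseteq> sp_plus (sp_mult G (sp_sum f n) A) (sp_mult G (f (Suc n)) A)"
    by (simp add: sp_mult_plus_left)
  also have "\<dots> \<subseteq> C"
    using Suc assms(1) by (intro sp_plus_least) auto
  finally show ?case .
qed

fun sp_iter :: "('g, 'b) monoid_scheme \<Rightarrow> ('g \<Rightarrow> 'k::field) set \<Rightarrow> nat \<Rightarrow> ('g \<Rightarrow> 'k) set \<Rightarrow> ('g \<Rightarrow> 'k) set" where
  "sp_iter G I 0 U = U"
| "sp_iter G I (Suc m) U = sp_mult G I (sp_iter G I m U)"

lemma sp_iter_Suc_inner: "sp_iter G I (Suc m) U = sp_iter G I m (sp_mult G I U)"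
  by (induction m) simp_all

lemma sp_iter_mono: "U \<subseteq> V \<Longrightarrow> sp_iter G I m U \<subseteq> sp_iter G I m V"
  by (induction m) (simp_all add: sp_mult_mono)

lemma add_closed_sp_iter: "add_closed U \<Longrightarrow> add_closed (sp_iter G I m U)"
  by (cases m) (simp_all add: add_closed_sp_mult)

lemma sp_iter_plus: "sp_iter G I m (sp_plus U V) \<subseteq> sp_plus (sp_iter G I m U) (sp_iter G I m V)"
proof (induction m)
  case (Suc m)
  have "sp_iter G I (Suc m) (sp_plus U V) \<subseteq> sp_mult G I (sp_plus (sp_iter G I m U) (sp_iter G I m V))"
    using Suc by (simp add: sp_mult_mono)
  also have "\<dots> \<subseteq> sp_plus (sp_iter G I (Suc m) U) (sp_iter G I (Suc m) V)"
    by (simp add: sp_mult_plus_right)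
  finally show ?case .
qed simp

context finite_group
begin

lemma sp_mult_sp_iter: "sp_mult G (sp_iter G I m U) V = sp_iter G I m (sp_mult G U V)"
  by (induction m) (simp_all add: sp_mult_assoc)

lemma sp_mult_sp_pow: "sp_mult G (sp_pow G I m) U = sp_iter G I m (sp_mult G (grp_alg G) U)"
  by (induction m) (simp_all add: sp_mult_assoc)

end

definition mixed_power_sum ::
    "('g, 'b) monoid_scheme \<Rightarrow> ('g \<Rightarrow> 'k::field) set \<Rightarrow> (nat \<Rightarrow> ('g \<Rightarrow> 'k) set) \<Rightarrow> nat \<Rightarrow> ('g \<Rightarrow> 'k) set" where
  "mixed_power_sum G I P n = sp_sum (\<lambda>i. sp_iter G I (n + 1 - i) (P i)) n"

lemma add_closed_mixed_power_sum:
  "(\<And>i. add_closed (P i)) \<Longrightarrow> add_closed (mixed_power_sum G I P n)"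
  unfolding mixed_power_sum_def by (intro add_closed_sp_sum add_closed_sp_iter)

lemma sp_iter_subset_mixed_power_sum:
  "(\<And>i. add_closed (P i)) \<Longrightarrow> 1 \<le> i \<Longrightarrow> i \<le> n \<Longrightarrow> sp_iter G I (n + 1 - i) (P i) \<subseteq> mixed_power_sum G I P n"
  unfolding mixed_power_sum_def by (rule sp_sum_upper[where f="\<lambda>i. sp_iter G I (n + 1 - i) (P i)"]) (simp_all add: add_closed_sp_iter)

context finite_group
begin

lemma mixed_power_sum_mult_subset:
  assumes P: "\<And>i. add_closed (P i)"
    and shift: "\<And>i. 1 \<le> i \<Longrightarrow> sp_mult G (P i) I \<subseteq> sp_plus (P (Suc i)) (sp_mult G I (P i))"
  shows "sp_plus (sp_mult G I (mixed_power_sum G I P n)) (sp_mult G (mixed_power_sum G I P n) I)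
         \<subseteq> mixed_power_sum G I P (Suc n)"
proof (intro sp_plus_least add_closed_mixed_power_sum P)
  let ?S = "mixed_power_sum G I P (Suc n)"
  have S: "add_closed ?S" by (rule add_closed_mixed_power_sum[OF P])
  show "sp_mult G I (mixed_power_sum G I P n) \<subseteq> ?S"
    unfolding mixed_power_sum_def[of G I P n]
  proof (rule sp_mult_sp_sum_left[OF S])
    fix i assume "1 \<le> i" "i \<le> n"
    then show "sp_mult G I (sp_iter G I (n + 1 - i) (P i)) \<subseteq> ?S"
      using sp_iter_subset_mixed_power_sum[OF P, of i "Suc n" G I] by (simp add: Suc_diff_le)
  qed
  show "sp_mult G (mixed_power_sum G I P n) I \<subseteq> ?S"
    unfolding mixed_power_sum_def[of G I P n]
  proof (rule sp_mult_sp_sum_right[OF S])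
    fix i assume i: "1 \<le> i" "i \<le> n"
    define m where "m = n + 1 - i"
    have "sp_mult G (sp_iter G I m (P i)) I = sp_iter G I m (sp_mult G (P i) I)"
      by (rule sp_mult_sp_iter)
    also have "\<dots> \<subseteq> sp_iter G I m (sp_plus (P (Suc i)) (sp_mult G I (P i)))"
      by (intro sp_iter_mono shift i)
    also have "\<dots> \<subseteq> sp_plus (sp_iter G I m (P (Suc i))) (sp_iter G I (Suc m) (P i))"
      unfolding sp_iter_Suc_inner by (rule sp_iter_plus)
    also have "\<dots> \<subseteq> ?S"
    proof (rule sp_plus_least[OF S])
      show "sp_iter G I m (P (Suc i)) \<subseteq> ?S"
        using i sp_iter_subset_mixed_power_sum[OF P, of "Suc i" "Suc n" G I] by (simp add: m_def)
      show "sp_iter G I (Suc m) (P i) \<subseteq> ?S"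
        using i sp_iter_subset_mixed_power_sum[OF P, of i "Suc n" G I] by (simp add: m_def Suc_diff_le)
    qed
    finally show "sp_mult G (sp_iter G I (n + 1 - i) (P i)) I \<subseteq> ?S"
      unfolding m_def .
  qed
qed

lemma mixed_power_sum_subset_mult:
  assumes P: "\<And>i. add_closed (P i)"
    and unshift: "\<And>i. 1 \<le> i \<Longrightarrow> P (Suc i) \<subseteq> sp_plus (sp_mult G (P i) I) (sp_mult G I (P i))"
    and n: "1 \<le> n"
  shows "mixed_power_sum G I P (Suc n)
         \<subseteq> sp_plus (sp_mult G I (mixed_power_sum G I P n)) (sp_mult G (mixed_power_sum G I P n) I)"
    (is "_ \<subseteq> sp_plus (sp_mult G I ?S) (sp_mult G ?S I)")
  unfolding mixed_power_sum_def[of G I P "Suc n"]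
proof (rule sp_sum_least)
  show C: "add_closed (sp_plus (sp_mult G I ?S) (sp_mult G ?S I))"
    by (intro add_closed_sp_plus add_closed_sp_mult)
  have T: "sp_iter G I (n + 1 - j) (P j) \<subseteq> ?S" if "1 \<le> j" "j \<le> n" for j
    using that by (rule sp_iter_subset_mixed_power_sum[OF P])
  have IS: "sp_mult G I (sp_iter G I (n + 1 - j) (P j)) \<subseteq> sp_plus (sp_mult G I ?S) (sp_mult G ?S I)"
    if "1 \<le> j" "j \<le> n" for j
    using sp_mult_mono[OF order_refl T[OF that]] sp_plus_upper1[OF sp_mult_zero] by blast
  have SI: "sp_mult G (sp_iter G I (n + 1 - j) (P j)) I \<subseteq> sp_plus (sp_mult G I ?S) (sp_mult G ?S I)"
    if "1 \<le> j" "j \<le> n" for j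
    using sp_mult_mono[OF T[OF that] order_refl] sp_plus_upper2[OF sp_mult_zero] by blast
  fix i assume i: "1 \<le> i" "i \<le> Suc n"
  show "sp_iter G I (Suc n + 1 - i) (P i) \<subseteq> sp_plus (sp_mult G I ?S) (sp_mult G ?S I)"
  proof (cases "i = 1")
    case True
    then show ?thesis using IS[of 1] n by simp
  next
    case False
    then obtain j where j: "i = Suc j" "1 \<le> j" "j \<le> n"
      using i by (cases i) auto
    define m where "m = n + 1 - j"
    have "sp_iter G I (Suc n + 1 - i) (P i) = sp_iter G I m (P (Suc j))"
      by (simp add: j m_def)
    also have "\<dots> \<subseteq> sp_iter G I m (sp_plus (sp_mult G (P j) I) (sp_mult G I (P j)))"
      by (intro sp_iter_mono unshift j)
    also have "\<dots> \<subseteq> sp_plus (sp_iter G I m (sp_mult G (P j) I)) (sp_iter G I m (sp_mult G I (P j)))"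
      by (rule sp_iter_plus)
    also have "\<dots> = sp_plus (sp_mult G (sp_iter G I m (P j)) I) (sp_mult G I (sp_iter G I m (P j)))"
      by (simp add: sp_mult_sp_iter sp_iter_Suc_inner[symmetric])
    also have "\<dots> \<subseteq> sp_plus (sp_mult G I ?S) (sp_mult G ?S I)"
      using IS[OF j(2,3)] SI[OF j(2,3)] by (intro sp_plus_least C) (simp_all add: m_def)
    finally show ?thesis .
  qed
qed

lemma recurrence_eq_mixed_power_sum:
  assumes P: "\<And>i. add_closed (P i)"
    and shift: "\<And>i. 1 \<le> i \<Longrightarrow> sp_mult G (P i) I \<subseteq> sp_plus (P (Suc i)) (sp_mult G I (P i))"
    and unshift: "\<And>i. 1 \<le> i \<Longrightarrow> P (Suc i) \<subseteq> sp_plus (sp_mult G (P i) I) (sp_mult G I (P i))"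
    and J_1: "J 1 = sp_mult G I (P 1)"
    and J_Suc: "\<And>n. 1 \<le> n \<Longrightarrow> J (Suc n) = sp_plus (sp_mult G I (J n)) (sp_mult G (J n) I)"
    and "1 \<le> n"
  shows "J n = mixed_power_sum G I P n"
  using \<open>1 \<le> n\<close>
proof (induction n rule: nat_induct_at_least)
  case base
  show ?case using J_1 by (simp add: mixed_power_sum_def)
next
  case (Suc n)
  then show ?case
    using mixed_power_sum_mult_subset[of P I n, OF P shift] mixed_power_sum_subset_mult[of P I n, OF P unshift]
    by (simp add: J_Suc antisym)
qed

end

definition lcs_ideal :: "('g, 'b) monoid_scheme \<Rightarrow> 'g set \<Rightarrow> nat \<Rightarrow> ('g \<Rightarrow> 'k::field) set" where
  "lcs_ideal G N i = sp_mult G (grp_alg G) (sp_mult G (aug_ideal G (rel_lcs G N i)) (grp_alg G))"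

context finite_group
begin

lemma augmentation_ga_mult: "sum (ga_mult G a b) (carrier G) = sum a (carrier G) * sum b (carrier G)"
proof -
  have "sum (ga_mult G a b) (carrier G) = (\<Sum>y\<in>carrier G. a y * (\<Sum>x\<in>carrier G. b (inv y \<otimes> x)))"
    unfolding ga_mult_def by (simp add: sum_distrib_left) (rule sum.swap)
  also have "\<dots> = (\<Sum>y\<in>carrier G. a y * sum b (carrier G))"
  proof (rule sum.cong[OF refl])
    fix y assume y: "y \<in> carrier G"
    have "(\<Sum>x\<in>carrier G. b (inv y \<otimes> x)) = sum b (carrier G)"
      using y by (intro sum.reindex_bij_witness[where i="\<lambda>z. y \<otimes> z" and j="\<lambda>x. inv y \<otimes> x"]) auto
    then show "a y * (\<Sum>x\<in>carrier G. b (inv y \<otimes> x)) = a y * sum b (carrier G)" by simp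
  qed
  also have "\<dots> = sum a (carrier G) * sum b (carrier G)"
    by (simp add: sum_distrib_right)
  finally show ?thesis .
qed

lemma aug_ideal_carrier_ideal:
  "sp_mult G (grp_alg G) (sp_mult G (aug_ideal G (carrier G)) (grp_alg G))
     = (aug_ideal G (carrier G) :: ('a \<Rightarrow> 'k::field) set)"
proof
  let ?A = "aug_ideal G (carrier G) :: ('a \<Rightarrow> 'k) set"
  have right: "ga_mult G a r \<in> ?A" and left: "ga_mult G r a \<in> ?A" if "a \<in> ?A" for a r :: "'a \<Rightarrow> 'k"
    using that augmentation_ga_mult[of a r] augmentation_ga_mult[of r a] ga_mult_in_grp_alg[of G a r] ga_mult_in_grp_alg[of G r a]
    unfolding aug_ideal_def by (auto simp: grp_alg_def)
  have "sp_mult G ?A (grp_alg G) \<subseteq> ?A"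
    by (rule sp_mult_least[OF add_closed_aug_ideal right])
  then have "sp_mult G (grp_alg G) (sp_mult G ?A (grp_alg G)) \<subseteq> sp_mult G (grp_alg G) ?A"
    by (rule sp_mult_mono[OF order_refl])
  also have "\<dots> \<subseteq> ?A"
    by (rule sp_mult_least[OF add_closed_aug_ideal left])
  finally show "sp_mult G (grp_alg G) (sp_mult G ?A (grp_alg G)) \<subseteq> ?A" .
  show "?A \<subseteq> sp_mult G (grp_alg G) (sp_mult G ?A (grp_alg G))"
  proof
    fix a assume a: "a \<in> ?A"
    then have "a = ga_mult G (indicator {\<one>}) (ga_mult G a (indicator {\<one>}))"
      by (simp add: aug_ideal_def ga_mult_one_left ga_mult_one_right ga_mult_in_grp_alg)
    also have "\<dots> \<in> sp_mult G (grp_alg G) (sp_mult G ?A (grp_alg G))"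
      using a by (intro sp_mult_prod indicator_in_grp_alg) simp_all
    finally show "a \<in> sp_mult G (grp_alg G) (sp_mult G ?A (grp_alg G))" .
  qed
qed

lemma lcs_ideal_shift:
  fixes N :: "'a set"
  assumes N: "N \<lhd> G" and i: "1 \<le> i"
  defines "I \<equiv> aug_ideal G N :: ('a \<Rightarrow> 'k::field) set"
  shows "sp_mult G (lcs_ideal G N i) I \<subseteq> sp_plus (lcs_ideal G N (Suc i)) (sp_mult G I (lcs_ideal G N i))"
    and "lcs_ideal G N (Suc i) \<subseteq> sp_plus (sp_mult G (lcs_ideal G N i) I) (sp_mult G I (lcs_ideal G N i))"
proof -
  let ?R = "grp_alg G :: ('a \<Rightarrow> 'k) set" and ?P = "lcs_ideal G N :: nat \<Rightarrow> ('a \<Rightarrow> 'k) set"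
  let ?A = "aug_ideal G (rel_lcs G N i) :: ('a \<Rightarrow> 'k) set"
  let ?X = "sp_mult G (sp_mult G ?A I) ?R" and ?Y = "sp_mult G (sp_mult G I ?A) ?R"
  let ?Z = "sp_mult G (aug_ideal G (rel_lcs G N (Suc i))) ?R"
  have Nsub: "subgroup N G"
    using N normal_imp_subgroup by blast
  have "rel_lcs G N (Suc i) = comm_subgroup G (rel_lcs G N i) N"
    using i by (cases i) auto
  then have XY: "sp_plus ?X ?Y = sp_plus ?Z ?Y"
    unfolding I_def
    using aug_commutator_ideal[OF subgroup_rel_lcs[OF subgroup.subset[OF Nsub]] Nsub]
    by (simp add: aug_prod_ideal_def aug_right_ideal_def)
  have comm: "sp_mult G ?R I = sp_mult G I ?R"
    unfolding I_def by (rule grp_alg_mult_aug_ideal_normal[OF N])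
  have RX: "sp_mult G ?R ?X = sp_mult G (?P i) I"
    unfolding lcs_ideal_def by (simp add: sp_mult_assoc comm)
  have RY: "sp_mult G ?R ?Y = sp_mult G I (?P i)"
    unfolding lcs_ideal_def by (simp add: sp_mult_assoc sp_mult_assoc[of ?R I, symmetric] comm)
  show "sp_mult G (?P i) I \<subseteq> sp_plus (?P (Suc i)) (sp_mult G I (?P i))"
  proof -
    have "sp_mult G (?P i) I \<subseteq> sp_mult G ?R (sp_plus ?X ?Y)"
      unfolding RX[symmetric] by (intro sp_mult_mono order_refl sp_plus_upper1 sp_mult_zero)
    also have "\<dots> \<subseteq> sp_plus (sp_mult G ?R ?Z) (sp_mult G ?R ?Y)"
      unfolding XY by (rule sp_mult_plus_right)
    finally show ?thesis
      unfolding RY by (simp add: lcs_ideal_def)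
  qed
  show "?P (Suc i) \<subseteq> sp_plus (sp_mult G (?P i) I) (sp_mult G I (?P i))"
  proof -
    have "?P (Suc i) \<subseteq> sp_mult G ?R (sp_plus ?Z ?Y)"
      unfolding lcs_ideal_def by (intro sp_mult_mono order_refl sp_plus_upper1 sp_mult_zero)
    also have "\<dots> \<subseteq> sp_plus (sp_mult G ?R ?X) (sp_mult G ?R ?Y)"
      unfolding XY[symmetric] by (rule sp_mult_plus_right)
    finally show ?thesis
      unfolding RX RY .
  qed
qed

lemma rel_J_eq_mixed_power_sum:
  assumes "N \<lhd> G" and "1 \<le> n"
  shows "(rel_J G N n :: ('a \<Rightarrow> 'k::field) set) = mixed_power_sum G (aug_ideal G N) (lcs_ideal G N) n"
proof (rule recurrence_eq_mixed_power_sum)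
  show "\<And>i. add_closed (lcs_ideal G N i :: ('a \<Rightarrow> 'k) set)"
    unfolding lcs_ideal_def by (rule add_closed_sp_mult)
  show "rel_J G N 1 = sp_mult G (aug_ideal G N) (lcs_ideal G N 1 :: ('a \<Rightarrow> 'k) set)"
    by (simp add: lcs_ideal_def aug_ideal_carrier_ideal)
  show "rel_J G N (Suc n) =
      sp_plus (sp_mult G (aug_ideal G N) (rel_J G N n)) (sp_mult G (rel_J G N n) (aug_ideal G N :: ('a \<Rightarrow> 'k) set))"
    if "1 \<le> n" for n
    using that by (cases n) auto
qed (use assms lcs_ideal_shift in blast)+

end

theorem mainTheorem8:
  fixes G :: "('g, 'b) monoid_scheme" and p :: nat and L N :: "'g set"
  assumes "group G" and "finite (carrier G)" and "Factorial_Ring.prime p"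
    and "\<exists>m. card (carrier G) = p ^ m"
    and "card (UNIV :: 'k set) = p"
    and "L \<lhd> G" and "N \<lhd> G"
  shows "(sp_plus (sp_mult G (sp_mult G (aug_ideal G L :: ('g \<Rightarrow> 'k::field) set) (aug_ideal G N)) (grp_alg G))
                 (sp_mult G (sp_mult G (aug_ideal G N) (aug_ideal G L)) (grp_alg G))
       = sp_plus (sp_mult G (aug_ideal G (comm_subgroup G L N)) (grp_alg G))
                 (sp_mult G (sp_mult G (aug_ideal G N) (aug_ideal G L)) (grp_alg G))) \<and>
      (\<forall>n\<ge>1. (rel_J G N n :: ('g \<Rightarrow> 'k) set) =
           sp_sum (\<lambda>i. sp_mult G (sp_pow G (aug_ideal G N) (n + 1 - i))
                               (sp_mult G (aug_ideal G (rel_lcs G N i)) (grp_alg G))) n)"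
proof -
  interpret finite_group G
    by (intro finite_group.intro finite_group_axioms.intro assms(1,2))
  have subgroups: "subgroup L G" "subgroup N G"
    using assms(6,7) normal_imp_subgroup by blast+
  have sum_eq: "sp_sum (\<lambda>i. sp_mult G (sp_pow G (aug_ideal G N) (n + 1 - i))
                               (sp_mult G (aug_ideal G (rel_lcs G N i)) (grp_alg G))) n
      = mixed_power_sum G (aug_ideal G N) (lcs_ideal G N :: nat \<Rightarrow> ('g \<Rightarrow> 'k) set) n" for n
    by (simp add: mixed_power_sum_def lcs_ideal_def sp_mult_sp_pow)
  show ?thesis
    unfolding sum_eq
    using aug_commutator_ideal[OF subgroups, unfolded aug_prod_ideal_def aug_right_ideal_def]
      rel_J_eq_mixed_power_sum[OF assms(7)]
    by blast
qed

end
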